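(* For every word $a_1\cdots a_n$ over a finite alphabet $A$, the following algorithm outputs, for each $i$, the value $x_i$ equal to the minimal length of an X-ranker $r$ with $r(a_1\cdots a_n)=i$: initialize $n_a\gets1$ for all $a\in A$; for $i=1,\dots,n$: let $c=a_i$, set $x_i\gets n_c$, then $n_c\gets n_c+1$, then for all $a\in A$ set $n_a\gets\min(n_a,n_c)$.
   Context: An X-ranker is a nonempty word over $\{\mathsf X_a : a\in A\}$; its length is its length as a word. For a word $w$, $\mathsf X_a(w)$ is the smallest $a$-position of $w$ and $r\mathsf X_a(w)$ is the smallest $a$-position greater than $r(w)$ (possibly undefined). *)

theory Defs
  imports Main
begin

text \<open>Words are lists; positions are 1-based: position i of w carries letter w ! (i - 1).\<close>

definition next_pos :: "'a list \<Rightarrow> nat \<Rightarrow> 'a \<Rightarrow> nat option" where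
  "next_pos w p a =
     (if \<exists>i. p < i \<and> i \<le> length w \<and> w ! (i - 1) = a
      then Some (LEAST i. p < i \<and> i \<le> length w \<and> w ! (i - 1) = a)
      else None)"

text \<open>An X-ranker X_{b1} ... X_{bk} is represented by the list [b1,...,bk].\<close>
fun eval_from :: "'a list \<Rightarrow> nat \<Rightarrow> 'a list \<Rightarrow> nat option" where
  "eval_from w p [] = Some p"
| "eval_from w p (a # r) = (case next_pos w p a of None \<Rightarrow> None | Some q \<Rightarrow> eval_from w q r)"

definition xrank_eval :: "'a list \<Rightarrow> 'a list \<Rightarrow> nat option" where
  "xrank_eval r w = eval_from w 0 r"

text \<open>The algorithm: state n :: 'a \<Rightarrow> nat (only the values on A matter).\<close>
fun alg_run :: "'a set \<Rightarrow> ('a \<Rightarrow> nat) \<Rightarrow> 'a list \<Rightarrow> nat list" where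
  "alg_run A n [] = []"
| "alg_run A n (c # w) =
     (let x = n c;
          n1 = n(c := n c + 1);
          n2 = (\<lambda>a. if a \<in> A then min (n1 a) (n1 c) else n1 a)
      in x # alg_run A n2 w)"

definition algorithm :: "'a set \<Rightarrow> 'a list \<Rightarrow> nat list" where
  "algorithm A w = alg_run A (\<lambda>_. 1) w"

end

theory Submission
  imports Defs
begin

text \<open>Call \<open>(p, q)\<close> an X-step of \<open>w\<close> if \<open>q\<close> is the first occurrence of the letter \<open>w\<^sub>q\<close>
  after position \<open>p\<close>. Appending \<open>X\<^sub>a\<close> to a ranker is exactly one X-step, so the minimal length
  of an X-ranker selecting \<open>q\<close> is the distance \<open>d(q)\<close> from \<open>0\<close> to \<open>q\<close> in the X-step graph.
  The predecessors of \<open>i + 1\<close> are the positions \<open>p \<le> i\<close> after which \<open>w\<^sub>i\<^sub>+\<^sub>1\<close> does not occur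
  up to \<open>i\<close>, hence \<open>d(i + 1) = 1 + min d\<close> over them. The counter \<open>n\<^sub>a\<close> of the algorithm
  maintains exactly \<open>1 + min d\<close> over the positions \<open>p \<le> i\<close> free of \<open>a\<close> up to \<open>i\<close>: reading
  \<open>c = w\<^sub>i\<^sub>+\<^sub>1\<close> resets this set to \<open>{i + 1}\<close> for \<open>c\<close> and adds \<open>i + 1\<close> to it for every other letter.\<close>

definition xstep :: "'a list \<Rightarrow> (nat \<times> nat) set" where
  "xstep w = {(p, q). p < q \<and> q \<le> length w \<and> (\<forall>j. p < j \<and> j < q \<longrightarrow> w ! (j - 1) \<noteq> w ! (q - 1))}"

definition xdist :: "'a list \<Rightarrow> nat \<Rightarrow> nat" where
  "xdist w q = (LEAST k. (0, q) \<in> xstep w ^^ k)"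

definition letter_free_since :: "'a list \<Rightarrow> nat \<Rightarrow> 'a \<Rightarrow> nat set" where
  "letter_free_since w i a = {p. p \<le> i \<and> (\<forall>j. p < j \<and> j \<le> i \<longrightarrow> w ! (j - 1) \<noteq> a)}"

definition counter_value :: "'a list \<Rightarrow> nat \<Rightarrow> 'a \<Rightarrow> nat" where
  "counter_value w i a = Min ((\<lambda>p. xdist w p + 1) ` letter_free_since w i a)"

lemma next_pos_eq_Some_iff:
  "next_pos w p a = Some q \<longleftrightarrow> (p, q) \<in> xstep w \<and> w ! (q - 1) = a"
proof -
  let ?P = "\<lambda>i. p < i \<and> i \<le> length w \<and> w ! (i - 1) = a"
  have "next_pos w p a = Some q \<longleftrightarrow> ?P q \<and> (\<forall>j<q. \<not> ?P j)"
  proof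
    assume "next_pos w p a = Some q"
    then have "\<exists>i. ?P i" and q: "q = (LEAST i. ?P i)"
      unfolding next_pos_def by (auto split: if_splits)
    have "?P q"
      unfolding q by (rule LeastI_ex) fact
    moreover have "\<not> ?P j" if "j < q" for j
      using that unfolding q by (rule not_less_Least)
    ultimately show "?P q \<and> (\<forall>j<q. \<not> ?P j)"
      by blast
  next
    assume "?P q \<and> (\<forall>j<q. \<not> ?P j)"
    then have "(LEAST i. ?P i) = q"
      by (intro Least_equality) (auto simp: not_less[symmetric])
    then show "next_pos w p a = Some q"
      using \<open>?P q \<and> _\<close> unfolding next_pos_def by auto
  qed
  also have "\<dots> \<longleftrightarrow> (p, q) \<in> xstep w \<and> w ! (q - 1) = a"
    unfolding xstep_def by auto
  finally show ?thesis .
qed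

lemma eval_from_Cons_eq_Some_iff:
  "eval_from w p (a # r) = Some q \<longleftrightarrow> (\<exists>p'. next_pos w p a = Some p' \<and> eval_from w p' r = Some q)"
  by (simp split: option.split)

lemma xstep_relpow_if_eval_from:
  assumes "eval_from w p r = Some q"
  shows "(p, q) \<in> xstep w ^^ length r"
  using assms
proof (induction r arbitrary: p)
  case (Cons a r)
  then obtain p' where "(p, p') \<in> xstep w" "eval_from w p' r = Some q"
    unfolding eval_from_Cons_eq_Some_iff next_pos_eq_Some_iff by blast
  with Cons.IH show ?case
    unfolding length_Cons by (blast intro: relpow_Suc_I2)
qed simp

lemma eval_from_if_xstep_relpow:
  assumes "(p, q) \<in> xstep w ^^ k"
  shows "\<exists>r. set r \<subseteq> set w \<and> length r = k \<and> eval_from w p r = Some q"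
  using assms
proof (induction k arbitrary: p)
  case (Suc k)
  then obtain p' r where p': "(p, p') \<in> xstep w" and
    r: "set r \<subseteq> set w" "length r = k" "eval_from w p' r = Some q"
    by (meson relpow_Suc_D2)
  then have "w ! (p' - 1) \<in> set w"
    unfolding xstep_def by auto
  moreover have "next_pos w p (w ! (p' - 1)) = Some p'"
    using p' by (simp add: next_pos_eq_Some_iff)
  ultimately show ?case
    using r by (intro exI[of _ "w ! (p' - 1) # r"]) auto
qed simp

lemma ex_xranker_iff_xstep_relpow:
  assumes "set w \<subseteq> A" and "0 < i"
  shows "(\<exists>r. r \<noteq> [] \<and> set r \<subseteq> A \<and> length r = k \<and> xrank_eval r w = Some i)
    \<longleftrightarrow> (0, i) \<in> xstep w ^^ k"
proof
  assume "\<exists>r. r \<noteq> [] \<and> set r \<subseteq> A \<and> length r = k \<and> xrank_eval r w = Some i"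
  then show "(0, i) \<in> xstep w ^^ k"
    unfolding xrank_eval_def using xstep_relpow_if_eval_from by blast
next
  assume "(0, i) \<in> xstep w ^^ k"
  moreover from this assms(2) have "k \<noteq> 0"
    by (auto intro: gr0I)
  ultimately show "\<exists>r. r \<noteq> [] \<and> set r \<subseteq> A \<and> length r = k \<and> xrank_eval r w = Some i"
    unfolding xrank_eval_def using eval_from_if_xstep_relpow assms(1) by fastforce
qed

lemma xstep_relpow_xdist:
  assumes "q \<le> length w"
  shows "(0, q) \<in> xstep w ^^ xdist w q"
proof -
  have "(0, q) \<in> xstep w ^^ q"
    using assms
  proof (induction q)
    case (Suc q)
    then have "(q, Suc q) \<in> xstep w"
      unfolding xstep_def by auto
    with Suc show ?case
      by (meson Suc_leD relpow_Suc_I)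
  qed simp
  then show ?thesis
    unfolding xdist_def by (rule LeastI)
qed

lemma xdist_le_Suc_xdist:
  assumes "(p, q) \<in> xstep w"
  shows "xdist w q \<le> xdist w p + 1"
proof -
  have "p \<le> length w"
    using assms unfolding xstep_def by auto
  then have "(0, q) \<in> xstep w ^^ Suc (xdist w p)"
    using xstep_relpow_xdist assms by (blast intro: relpow_Suc_I)
  then show ?thesis
    unfolding xdist_def by (simp add: Least_le)
qed

lemma xdist_Suc:
  assumes "i < length w"
  shows "xdist w (Suc i) = Min ((\<lambda>p. xdist w p + 1) ` letter_free_since w i (w ! i))"
proof -
  have preds: "letter_free_since w i (w ! i) = {p. (p, Suc i) \<in> xstep w}"
    using assms unfolding letter_free_since_def xstep_def by (auto simp: less_Suc_eq_le)
  obtain m where m: "xdist w (Suc i) = Suc m"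
    using xstep_relpow_xdist[of "Suc i" w] assms by (cases "xdist w (Suc i)") auto
  then obtain p where p: "(0, p) \<in> xstep w ^^ m" "(p, Suc i) \<in> xstep w"
    using xstep_relpow_xdist[of "Suc i" w] assms by (metis Suc_leI relpow_Suc_E)
  have "xdist w p \<le> m"
    unfolding xdist_def using p(1) by (simp add: Least_le)
  with m xdist_le_Suc_xdist[OF p(2)] have "xdist w (Suc i) = xdist w p + 1"
    by simp
  show ?thesis
    unfolding preds
  proof (rule Min_eqI[symmetric])
    show "finite ((\<lambda>p. xdist w p + 1) ` {p. (p, Suc i) \<in> xstep w})"
      by (rule finite_imageI, rule finite_subset[of _ "{..<Suc i}"]) (auto simp: xstep_def)
    show "xdist w (Suc i) \<le> y" if "y \<in> (\<lambda>p. xdist w p + 1) ` {p. (p, Suc i) \<in> xstep w}" for y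
      using that by (auto dest: xdist_le_Suc_xdist)
    show "xdist w (Suc i) \<in> (\<lambda>p. xdist w p + 1) ` {p. (p, Suc i) \<in> xstep w}"
      using p(2) \<open>xdist w (Suc i) = xdist w p + 1\<close> by auto
  qed
qed

lemma counter_value_init: "counter_value w 0 a = 1"
proof -
  have "letter_free_since w 0 a = {0}"
    unfolding letter_free_since_def by auto
  moreover have "xdist w 0 = 0"
    unfolding xdist_def by (simp add: Least_eq_0)
  ultimately show ?thesis
    unfolding counter_value_def by simp
qed

lemma counter_value_Suc_same: "counter_value w (Suc i) (w ! i) = xdist w (Suc i) + 1"
proof -
  have "letter_free_since w (Suc i) (w ! i) = {Suc i}"
    unfolding letter_free_since_def by (auto dest: spec[of _ "Suc i"])
  then show ?thesis
    unfolding counter_value_def by simp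
qed

lemma counter_value_Suc_other:
  assumes "a \<noteq> w ! i"
  shows "counter_value w (Suc i) a = min (xdist w (Suc i) + 1) (counter_value w i a)"
proof -
  have insert: "letter_free_since w (Suc i) a = insert (Suc i) (letter_free_since w i a)"
    using assms unfolding letter_free_since_def by (auto simp: le_Suc_eq)
  have "finite (letter_free_since w i a)" "i \<in> letter_free_since w i a"
    unfolding letter_free_since_def by auto
  then show ?thesis
    unfolding counter_value_def insert image_insert by (subst Min_insert) auto
qed

lemma alg_run_eq_xdist:
  assumes "set w \<subseteq> A" and "i \<le> length w" and "\<forall>a\<in>A. n a = counter_value w i a"
  shows "alg_run A n (drop i w) = map (xdist w) [Suc i..<Suc (length w)]"
  using assms(2,3)
proof (induction "length w - i" arbitrary: i n)
  case 0
  then show ?case by simp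
next
  case (Suc m)
  let ?c = "w ! i"
  let ?n' = "\<lambda>a. if a \<in> A then min ((n(?c := n ?c + 1)) a) ((n(?c := n ?c + 1)) ?c)
                  else (n(?c := n ?c + 1)) a"
  have i: "i < length w"
    using Suc.hyps by simp
  have "?c \<in> A"
    using i assms(1) by auto
  then have c: "n ?c = xdist w (Suc i)"
    using Suc.prems(2) xdist_Suc[OF i] unfolding counter_value_def by simp
  have "\<forall>a\<in>A. ?n' a = counter_value w (Suc i) a"
    using Suc.prems(2) c by (auto simp: counter_value_Suc_same counter_value_Suc_other)
  then have "alg_run A ?n' (drop (Suc i) w) = map (xdist w) [Suc (Suc i)..<Suc (length w)]"
    using Suc.hyps i by (intro Suc.hyps(1)) auto
  moreover have "alg_run A n (drop i w) = n ?c # alg_run A ?n' (drop (Suc i) w)"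
    by (subst Cons_nth_drop_Suc[symmetric, OF i]) (simp only: alg_run.simps Let_def)
  moreover have "[Suc i..<Suc (length w)] = Suc i # [Suc (Suc i)..<Suc (length w)]"
    using i by (simp add: upt_conv_Cons del: upt_Suc)
  ultimately show ?case
    using c by (simp del: upt_Suc)
qed

theorem lemma15:
  fixes A :: "'a set" and w :: "'a list"
  assumes "finite A" and "set w \<subseteq> A"
  shows "length (algorithm A w) = length w \<and>
         (\<forall>i. 1 \<le> i \<and> i \<le> length w \<longrightarrow>
            algorithm A w ! (i - 1) =
              (LEAST k. \<exists>r. r \<noteq> [] \<and> set r \<subseteq> A \<and> length r = k \<and> xrank_eval r w = Some i))"
proof -
  have alg: "algorithm A w = map (xdist w) [1..<Suc (length w)]"
    using alg_run_eq_xdist[OF assms(2), of 0 "\<lambda>_. 1"]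
    unfolding algorithm_def by (simp add: counter_value_init del: upt_Suc)
  have "(\<exists>r. r \<noteq> [] \<and> set r \<subseteq> A \<and> length r = k \<and> xrank_eval r w = Some i)
      \<longleftrightarrow> (0, i) \<in> xstep w ^^ k" if "1 \<le> i" for i k
    using that ex_xranker_iff_xstep_relpow[OF assms(2)] by simp
  then show ?thesis
    unfolding alg xdist_def by (auto simp del: upt_Suc)
qed

end
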